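(* Let $J\subset \mathbb{K}[x_0,\ldots,x_n]$ be a saturated Borel-fixed ideal such that $\mathbb{K}[x_0,\ldots,x_n]/J$ has Hilbert polynomial $p(t)$, and let $r$ be the Gotzmann number of $p(t)$. Let $\{J_r\}\subset\mathcal{P}^n_r$ be the set of monomials of degree $r$ in $J$, and let $x^\beta\in\{J_r\}$ be a minimal element of $\{J_r\}$ with respect to the Borel order $\leq_B$ such that $x_0\mid x^\beta$. Then the ideal $I=\langle \{J_r\}\setminus\{x^\beta\}\rangle^{\mathrm{sat}}$ is Borel-fixed and $\mathbb{K}[x_0,\ldots,x_n]/I$ has Hilbert polynomial $p(t)+1$.
   Context: $\mathbb{K}$ is a field of characteristic $0$, and the variables of $\mathbb{K}[x_0,\ldots,x_n]$ are ordered $x_n>x_{n-1}>\cdots>x_0$. The Hilbert polynomial of a homogeneous ideal $I$ means the Hilbert polynomial of $\mathbb{K}[x]/I$, i.e. $p(t)=\dim_\mathbb{K}\mathbb{K}[x]_t/I_t$ for $t\gg0$. A homogeneous ideal is Borel-fixed iff it is a monomial ideal such that whenever $x^\alpha\in I$, $x_i\mid x^\alpha$ and $j>i$, then $\frac{x_j}{x_i}x^\alpha\in I$. $\mathcal{P}^n_r$ denotes the set of monomials of degree $r$ in $x_0,\ldots,x_n$, partially ordered by the Borel order $\leq_B$: the transitive closure of the relations $\frac{x_{i+1}}{x_i}x^\alpha>_B x^\alpha$ for all monomials $x^\alpha$ and all $i$ with $x_i\mid x^\alpha$. For a set $S$ of monomials, $\langle S\rangle$ is the ideal it generates and $\langle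 S\rangle^{\mathrm{sat}}$ its saturation with respect to the irrelevant ideal $(x_0,\ldots,x_n)$. Every admissible Hilbert polynomial has a unique Gotzmann decomposition $p(t)=\binom{t+a_1}{a_1}+\binom{t+a_2-1}{a_2}+\cdots+\binom{t+a_r-(r-1)}{a_r}$ with $a_1\geq\cdots\geq a_r\geq 0$; the number $r$ of summands is the Gotzmann number of $p(t)$. *)

theory Defs
  imports Complex_Main "HOL-Computational_Algebra.Polynomial"
begin

text \<open>Monomials of K[x_0,...,x_n] are represented by their exponent vectors
  a :: nat => nat with a i = 0 for i > n.  Monomial ideals are represented by
  the set of monomials they contain (a monomial ideal is determined by, and has
  as K-basis, its monomials).\<close>

definition mons :: "nat \<Rightarrow> (nat \<Rightarrow> nat) set" where
  "mons n = {a. \<forall>i>n. a i = 0}"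

definition mdeg :: "nat \<Rightarrow> (nat \<Rightarrow> nat) \<Rightarrow> nat" where
  "mdeg n a = (\<Sum>i\<le>n. a i)"

definition mons_deg :: "nat \<Rightarrow> nat \<Rightarrow> (nat \<Rightarrow> nat) set" where
  "mons_deg n t = {a \<in> mons n. mdeg n a = t}"

definition mdvd :: "(nat \<Rightarrow> nat) \<Rightarrow> (nat \<Rightarrow> nat) \<Rightarrow> bool" where
  "mdvd a b \<longleftrightarrow> (\<forall>i. a i \<le> b i)"

definition mon_ideal :: "nat \<Rightarrow> (nat \<Rightarrow> nat) set \<Rightarrow> bool" where
  "mon_ideal n J \<longleftrightarrow> J \<subseteq> mons n \<and> (\<forall>a\<in>J. \<forall>b\<in>mons n. (\<lambda>i. a i + b i) \<in> J)"

definition mgen :: "nat \<Rightarrow> (nat \<Rightarrow> nat) set \<Rightarrow> (nat \<Rightarrow> nat) set" where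
  "mgen n S = {a \<in> mons n. \<exists>s\<in>S. mdvd s a}"

text \<open>saturation w.r.t. the irrelevant ideal (x_0,...,x_n): a monomial x^a lies in
  I : (x_0,...,x_n)^\<infinity> iff x^a * (x_0,...,x_n)^k \<subseteq> I for some k\<close>
definition msat :: "nat \<Rightarrow> (nat \<Rightarrow> nat) set \<Rightarrow> (nat \<Rightarrow> nat) set" where
  "msat n I = {a \<in> mons n. \<exists>k. \<forall>m\<in>mons_deg n k. (\<lambda>i. a i + m i) \<in> I}"

definition mmove :: "(nat \<Rightarrow> nat) \<Rightarrow> nat \<Rightarrow> nat \<Rightarrow> (nat \<Rightarrow> nat)" where
  "mmove a i j = (a(i := a i - 1))(j := a j + 1)"

definition borel_fixed :: "nat \<Rightarrow> (nat \<Rightarrow> nat) set \<Rightarrow> bool" where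
  "borel_fixed n J \<longleftrightarrow> mon_ideal n J \<and>
     (\<forall>a\<in>J. \<forall>i j. 0 < a i \<and> i < j \<and> j \<le> n \<longrightarrow> mmove a i j \<in> J)"

definition borel_step :: "nat \<Rightarrow> (nat \<Rightarrow> nat) \<Rightarrow> (nat \<Rightarrow> nat) \<Rightarrow> bool" where
  "borel_step n a b \<longleftrightarrow> a \<in> mons n \<and> (\<exists>i. i < n \<and> 0 < a i \<and> b = mmove a i (Suc i))"

definition borel_le :: "nat \<Rightarrow> (nat \<Rightarrow> nat) \<Rightarrow> (nat \<Rightarrow> nat) \<Rightarrow> bool" where
  "borel_le n = (borel_step n)\<^sup>*\<^sup>*"

text \<open>Hilbert function of K[x]/I: number of degree-t monomials not in I
  (these form a K-basis of K[x]_t / I_t for a monomial ideal I)\<close>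
definition hilb_fun :: "nat \<Rightarrow> (nat \<Rightarrow> nat) set \<Rightarrow> nat \<Rightarrow> nat" where
  "hilb_fun n I t = card (mons_deg n t - I)"

definition has_hilb_poly :: "nat \<Rightarrow> (nat \<Rightarrow> nat) set \<Rightarrow> real poly \<Rightarrow> bool" where
  "has_hilb_poly n I p \<longleftrightarrow> (\<exists>t0. \<forall>t\<ge>t0. real (hilb_fun n I t) = poly p (real t))"

text \<open>Gotzmann decomposition p(t) = \<Sum>_{i=1}^r binom(t+a_i-(i-1), a_i), a_1 \<ge> ... \<ge> a_r \<ge> 0
  (list index i here is 0-based, so the shift is i); the identity is one of
  polynomials in t, equivalently of values at all natural t.\<close>
definition gotzmann_decomp :: "real poly \<Rightarrow> nat list \<Rightarrow> bool" where
  "gotzmann_decomp p as \<longleftrightarrow> sorted_wrt (\<ge>) as \<and>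
     (\<forall>t::nat. poly p (real t) =
        (\<Sum>i<length as. (real t + real (as ! i) - real i) gchoose (as ! i)))"

definition gotzmann_number :: "real poly \<Rightarrow> nat" where
  "gotzmann_number p = (THE r. \<exists>as. gotzmann_decomp p as \<and> length as = r)"

end

theory Submission
  imports Defs
begin

text \<open>The Hilbert function of a saturated Borel-fixed ideal \<open>J\<close> counts the \<open>x\<^sub>0\<close>-free monomials
  outside \<open>J\<close> of degree at most \<open>t\<close>. Splitting such a set of monomials along its smallest
  variable (the elements whose whole \<open>x\<^sub>k\<close>-ray stays outside, and the rest) shows by induction
  on the number of variables that this count is bounded below by the Gotzmann function of a
  sorted list of length \<open>r\<close>, agrees with it from degree \<open>r - 1\<close> on, and that \<open>J\<close> is generated
  in degrees at most \<open>r\<close>; the list is then the Gotzmann decomposition of the Hilbert polynomial.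

  Hence every monomial of \<open>J\<close> of degree \<open>t \<ge> r\<close> is a multiple of some \<open>x\<^sup>\<alpha> \<in> J\<^sub>r\<close>. Removing the
  Borel-minimal \<open>x\<^sup>\<beta>\<close> leaves a Borel-closed set of generators, and after saturation the only
  monomial of degree \<open>t \<ge> r\<close> that is lost is \<open>x\<^sup>\<beta> x\<^sub>0\<^sup>t\<^sup>-\<^sup>r\<close>: every other multiple of \<open>x\<^sup>\<beta>\<close> is a
  multiple of some \<open>x\<^sub>j/x\<^sub>0 \<cdot> x\<^sup>\<beta>\<close>, while a generator dividing \<open>x\<^sup>\<beta>\<close> up to its \<open>x\<^sub>0\<close>-exponent would
  lie Borel-below \<open>x\<^sup>\<beta>\<close>. So the Hilbert polynomial increases by exactly one.\<close>

section \<open>Monomials\<close>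

lemma mdeg_fun_upd: "k \<le> n \<Longrightarrow> mdeg n (a(k := x)) + a k = mdeg n a + x"
  unfolding mdeg_def by (simp add: sum.remove[of "{..n}" k])

lemma mdeg_split_x0: "mdeg n a = a 0 + (\<Sum>i\<in>{1..n}. a i)"
proof -
  have "{..n} = insert 0 {1..n}" by auto
  then show ?thesis unfolding mdeg_def by simp
qed

lemma eq_fun_upd_x0_if_eq_but_x0:
  assumes "a \<in> mons n" "b \<in> mons n" "mdeg n b \<le> mdeg n a" "\<forall>j\<in>{1..n}. a j = b j"
  shows "a = b(0 := b 0 + (mdeg n a - mdeg n b))"
proof
  have "(\<Sum>i\<in>{1..n}. a i) = (\<Sum>i\<in>{1..n}. b i)" using assms(4) by simp
  then have "a 0 = b 0 + (mdeg n a - mdeg n b)"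
    using assms(3) mdeg_split_x0[of n a] mdeg_split_x0[of n b] by simp
  then show "a l = (b(0 := b 0 + (mdeg n a - mdeg n b))) l" for l
    using assms(1,2,4) unfolding mons_def by (cases "l = 0"; cases "l \<le> n") auto
qed

lemma mdvd_refl [simp]: "mdvd a a"
  by (simp add: mdvd_def)

lemma mdvd_trans: "mdvd a b \<Longrightarrow> mdvd b c \<Longrightarrow> mdvd a c"
  unfolding mdvd_def using le_trans by blast

lemma mons_mdvd: "mdvd a b \<Longrightarrow> b \<in> mons n \<Longrightarrow> a \<in> mons n"
  unfolding mons_def mdvd_def mem_Collect_eq by (metis le_zero_eq)

lemma mons_deg_0: "m \<in> mons_deg n 0 \<Longrightarrow> m = (\<lambda>_. 0)"
  unfolding mons_deg_def mons_def mdeg_def by (auto simp: fun_eq_iff) (metis atMost_iff not_le)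

lemma mdvd_intermediate_deg:
  assumes "mdvd h w" "w \<in> mons n" "mdeg n h \<le> e" "e \<le> mdeg n w"
  shows "\<exists>c. mdvd h c \<and> mdvd c w \<and> mdeg n c = e"
  using assms(3,4)
proof (induction e rule: nat_induct_at_least)
  case base
  show ?case using assms(1) by (intro exI[of _ h]) simp
next
  case (Suc m)
  then obtain c where c: "mdvd h c" "mdvd c w" "mdeg n c = m" by auto
  have "c \<noteq> w" using c Suc by auto
  then obtain i where i: "c i \<noteq> w i" by auto
  have "i \<le> n"
  proof (rule ccontr)
    assume "\<not> i \<le> n"
    then have "w i = 0" "c i = 0" using mons_mdvd[OF c(2) assms(2)] assms(2) by (auto simp: mons_def)
    then show False using i by simp
  qed
  with i c have lt: "c i < w i" unfolding mdvd_def by (simp add: le_neq_implies_less)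
  let ?c = "c(i := c i + 1)"
  have "mdvd h ?c" "mdvd ?c w" using c lt unfolding mdvd_def by (auto simp: le_SucI)
  moreover have "mdeg n ?c = Suc m" using mdeg_fun_upd[OF \<open>i \<le> n\<close>, of c "c i + 1"] c by simp
  ultimately show ?case by blast
qed

lemma mdvd_fun_upd_0_iff: "mdvd h (u(k := 0)) \<longleftrightarrow> mdvd h u \<and> h k = 0"
proof
  assume h: "mdvd h (u(k := 0))"
  have hk: "h k = 0" using h[unfolded mdvd_def, rule_format, of k] by simp
  have "h i \<le> u i" for i using h[unfolded mdvd_def, rule_format, of i] hk by (cases "i = k") auto
  then show "mdvd h u \<and> h k = 0" using hk unfolding mdvd_def by auto
qed (auto simp: mdvd_def)

lemma card_mdeg_eq_dehomogenize:
  assumes k: "k \<le> n" and A: "\<And>u. u \<in> A \<longleftrightarrow> u(k := 0) \<in> B" and B: "\<And>v. v \<in> B \<Longrightarrow> v k = 0"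
  shows "card {u \<in> A. mdeg n u = s} = card {v \<in> B. mdeg n v \<le> s}"
proof (rule bij_betw_same_card[of "\<lambda>u. u(k := 0)"],
    rule bij_betw_byWitness[where f' = "\<lambda>v. v(k := s - mdeg n v)"])
  have deg: "mdeg n u = mdeg n (u(k := 0)) + u k" for u
    using mdeg_fun_upd[OF k, of u 0] by linarith
  show "\<forall>u\<in>{u \<in> A. mdeg n u = s}. (u(k := 0))(k := s - mdeg n (u(k := 0))) = u"
  proof
    fix u assume "u \<in> {u \<in> A. mdeg n u = s}"
    then have "mdeg n u = s" by simp
    then have "s - mdeg n (u(k := 0)) = u k" using deg[of u] by linarith
    then show "(u(k := 0))(k := s - mdeg n (u(k := 0))) = u" by simp
  qed
  show "\<forall>v\<in>{v \<in> B. mdeg n v \<le> s}. (v(k := s - mdeg n v))(k := 0) = v"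
    using B by auto
  show "(\<lambda>u. u(k := 0)) ` {u \<in> A. mdeg n u = s} \<subseteq> {v \<in> B. mdeg n v \<le> s}"
  proof
    fix v assume "v \<in> (\<lambda>u. u(k := 0)) ` {u \<in> A. mdeg n u = s}"
    then obtain u where u: "u \<in> A" "mdeg n u = s" and v: "v = u(k := 0)" by blast
    have "u(k := 0) \<in> B" using u(1) A by blast
    moreover have "mdeg n (u(k := 0)) \<le> s" using deg[of u] u(2) by linarith
    ultimately show "v \<in> {v \<in> B. mdeg n v \<le> s}" using v by simp
  qed
  show "(\<lambda>v. v(k := s - mdeg n v)) ` {v \<in> B. mdeg n v \<le> s} \<subseteq> {u \<in> A. mdeg n u = s}"
  proof
    fix w assume "w \<in> (\<lambda>v. v(k := s - mdeg n v)) ` {v \<in> B. mdeg n v \<le> s}"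
    then obtain v where v: "v \<in> B" "mdeg n v \<le> s" and w: "w = v(k := s - mdeg n v)" by blast
    have vk: "v k = 0" using B v(1) .
    then have "v(k := 0) = v" by auto
    then have "v(k := s - mdeg n v) \<in> A" using A[of "v(k := s - mdeg n v)"] v(1) by simp
    moreover have "mdeg n (v(k := j)) = s" if "j = s - mdeg n v" for j
      using mdeg_fun_upd[OF k, of v j] vk v(2) that by simp
    ultimately show "w \<in> {u \<in> A. mdeg n u = s}" using w by blast
  qed
qed

lemma finite_mons_mdeg_le: "finite {a \<in> mons n. mdeg n a \<le> B}"
proof -
  have "{a \<in> mons n. mdeg n a \<le> B} \<subseteq>
      {f. \<forall>x. (x \<in> {..n} \<longrightarrow> f x \<in> {..B}) \<and> (x \<notin> {..n} \<longrightarrow> f x = 0)}"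
  proof (intro subsetI CollectI allI conjI impI)
    fix a x assume a: "a \<in> {a \<in> mons n. mdeg n a \<le> B}"
    { assume "x \<in> {..n}"
      then have "a x \<le> mdeg n a" unfolding mdeg_def by (intro member_le_sum) auto
      then show "a x \<in> {..B}" using a by simp }
    { assume "x \<notin> {..n}" then show "a x = 0" using a by (simp add: mons_def) }
  qed
  then show ?thesis by (rule finite_subset) (intro finite_set_of_finite_funs; simp)
qed

lemma finite_mons_deg: "finite (mons_deg n t)"
  by (rule finite_subset[OF _ finite_mons_mdeg_le[of n t]]) (auto simp: mons_deg_def)

lemma mmove_mons: "a \<in> mons n \<Longrightarrow> j \<le> n \<Longrightarrow> mmove a i j \<in> mons n"
  unfolding mons_def mmove_def by auto

lemma mdeg_mmove:
  assumes "0 < a i" "i \<le> n" "j \<le> n" "i \<noteq> j"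
  shows "mdeg n (mmove a i j) = mdeg n a"
  using mdeg_fun_upd[OF assms(2), of a "a i - 1"]
    mdeg_fun_upd[OF assms(3), of "a(i := a i - 1)" "a j + 1"] assms
  unfolding mmove_def by simp

lemma mmove_mons_deg:
  "a \<in> mons_deg n t \<Longrightarrow> 0 < a i \<Longrightarrow> i < j \<Longrightarrow> j \<le> n \<Longrightarrow> mmove a i j \<in> mons_deg n t"
  unfolding mons_deg_def using mmove_mons mdeg_mmove by simp

lemma mdvd_mmove: "mdvd b a \<Longrightarrow> b j < a j \<Longrightarrow> mdvd (mmove b i j) a"
  unfolding mdvd_def mmove_def by (auto simp: le_diff_conv le_SucI)

lemma mmove_mdvd_mmove: "mdvd b a \<Longrightarrow> b i = a i \<Longrightarrow> mdvd (mmove b i j) (mmove a i j)"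
  unfolding mdvd_def mmove_def by auto

section \<open>Gotzmann representations\<close>

text \<open>The terms with \<open>i > t\<close>,
  where the subtraction would truncate, are dropped; for \<open>t \<ge> length as - 1\<close> there are none.\<close>

definition gotzmann_fun :: "nat list \<Rightarrow> nat \<Rightarrow> nat" where
  "gotzmann_fun as t = (\<Sum>i<length as. if i \<le> t then (t + as!i - i) choose (as!i) else 0)"

lemma gotzmann_fun_snoc:
  "gotzmann_fun (xs @ [a]) t =
     gotzmann_fun xs t + (if length xs \<le> t then (t + a - length xs) choose a else 0)"
proof -
  have "(\<Sum>i<length xs. if i \<le> t then (t + (xs@[a])!i - i) choose ((xs@[a])!i) else 0) =
      gotzmann_fun xs t"
    unfolding gotzmann_fun_def by (intro sum.cong) (auto simp: nth_append)
  then show ?thesis unfolding gotzmann_fun_def by simp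
qed

lemma gotzmann_fun_append_zeros:
  "gotzmann_fun (xs @ replicate z 0) t = gotzmann_fun xs t + min z (Suc t - length xs)"
proof (induction z)
  case (Suc z)
  have "gotzmann_fun (xs @ replicate (Suc z) 0) t = gotzmann_fun ((xs @ replicate z 0) @ [0]) t"
    by (simp add: replicate_append_same)
  also have "\<dots> = gotzmann_fun xs t + min z (Suc t - length xs) + (if length xs + z \<le> t then 1 else 0)"
    by (simp only: gotzmann_fun_snoc Suc) simp
  also have "\<dots> = gotzmann_fun xs t + min (Suc z) (Suc t - length xs)" by auto
  finally show ?case .
qed simp

lemma sum_gotzmann_fun: "(\<Sum>s\<le>t. gotzmann_fun bs s) = gotzmann_fun (map Suc bs) t"
proof (induction t)
  case 0
  have "(\<Sum>s\<le>0. gotzmann_fun bs s) = gotzmann_fun bs 0" by simp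
  also have "\<dots> = gotzmann_fun (map Suc bs) 0"
    unfolding gotzmann_fun_def length_map by (intro sum.cong refl) auto
  finally show ?case .
next
  case (Suc t)
  have summand: "(if i \<le> Suc t then (Suc t + Suc b - i) choose Suc b else 0) =
      (if i \<le> t then (t + Suc b - i) choose Suc b else 0)
      + (if i \<le> Suc t then (Suc t + b - i) choose b else 0)" for i b
  proof (cases "i \<le> t")
    case True
    then have "Suc t + Suc b - i = Suc (t + Suc b - i)" "Suc t + b - i = t + Suc b - i" by auto
    then show ?thesis using True by simp
  qed (cases "i = Suc t"; auto)
  have "gotzmann_fun (map Suc bs) (Suc t) = gotzmann_fun (map Suc bs) t + gotzmann_fun bs (Suc t)"
    unfolding gotzmann_fun_def length_map sum.distrib[symmetric]
    by (intro sum.cong refl) (simp only: nth_map lessThan_iff summand)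
  then show ?case using Suc by simp
qed

lemma sorted_decr_split:
  "sorted_wrt (\<ge>) as \<Longrightarrow> \<exists>ds z. as = map Suc ds @ replicate z 0 \<and> sorted_wrt (\<ge>) ds"
proof (induction as)
  case Nil
  then show ?case by (intro exI[of _ "[]"] exI[of _ 0]) simp
next
  case (Cons a as)
  show ?case
  proof (cases a)
    case 0
    with Cons.prems have "as = replicate (length as) 0"
      by (simp add: list_eq_iff_nth_eq)
    then show ?thesis using 0 by (intro exI[of _ "[]"] exI[of _ "Suc (length as)"]) simp
  next
    case (Suc a')
    from Cons obtain ds z where dz: "as = map Suc ds @ replicate z 0" "sorted_wrt (\<ge>) ds" by auto
    have "\<forall>d\<in>set ds. d \<le> a'" using Cons.prems dz(1) Suc by auto
    then show ?thesis using dz Suc by (intro exI[of _ "a' # ds"] exI[of _ z]) auto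
  qed
qed

text \<open>Uniqueness: writing a sorted list as \<open>map Suc ds @ replicate z 0\<close>, the first
  difference of its Gotzmann function is eventually that of \<open>ds\<close>, and \<open>z\<close> is then
  recovered from the values.\<close>

lemma gotzmann_fun_eventually_eq_imp_eq:
  assumes "sorted_wrt (\<ge>) as" "sorted_wrt (\<ge>) bs"
    and "\<forall>t\<ge>T. gotzmann_fun as t = gotzmann_fun bs t"
  shows "as = bs"
  using assms
proof (induction "length as + length bs + sum_list as + sum_list bs"
    arbitrary: as bs T rule: less_induct)
  case less
  show ?case
  proof (cases "as = [] \<and> bs = []")
    case False
    obtain ds1 z1 where d1: "as = map Suc ds1 @ replicate z1 0" "sorted_wrt (\<ge>) ds1"
      using sorted_decr_split[OF less.prems(1)] by auto
    obtain ds2 z2 where d2: "bs = map Suc ds2 @ replicate z2 0" "sorted_wrt (\<ge>) ds2"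
      using sorted_decr_split[OF less.prems(2)] by auto
    define T' where "T' = T + length as + length bs"
    have shape: "gotzmann_fun as t = gotzmann_fun (map Suc ds1) t + z1"
      "gotzmann_fun bs t = gotzmann_fun (map Suc ds2) t + z2" if "T' \<le> t" for t
      using that d1(1) d2(1) unfolding T'_def by (auto simp: gotzmann_fun_append_zeros)
    have step: "gotzmann_fun (map Suc ds) (Suc t) = gotzmann_fun (map Suc ds) t + gotzmann_fun ds (Suc t)"
      for ds t using sum_gotzmann_fun[of ds "Suc t"] sum_gotzmann_fun[of ds t] by simp
    have "\<forall>t\<ge>Suc T'. gotzmann_fun ds1 t = gotzmann_fun ds2 t"
    proof (intro allI impI)
      fix t assume t: "Suc T' \<le> t"
      then obtain t' where t': "t = Suc t'" "T' \<le> t'" by (cases t) auto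
      then have "gotzmann_fun as t = gotzmann_fun bs t" "gotzmann_fun as t' = gotzmann_fun bs t'"
        using less.prems(3) unfolding T'_def by auto
      then show "gotzmann_fun ds1 t = gotzmann_fun ds2 t"
        using shape[of t] shape[of t'] step[of ds1 t'] step[of ds2 t'] t' by simp
    qed
    moreover have "length ds1 + length ds2 + sum_list ds1 + sum_list ds2 <
        length as + length bs + sum_list as + sum_list bs"
      using d1(1) d2(1) False by (auto simp: sum_list_Suc)
    ultimately have "ds1 = ds2" using less.hyps d1(2) d2(2) by blast
    moreover have "z1 = z2"
      using shape[of T'] less.prems(3) \<open>ds1 = ds2\<close> unfolding T'_def by simp
    ultimately show ?thesis using d1 d2 by simp
  qed simp
qed

lemma gotzmann_sum_eq_fun:
  assumes "length as \<le> Suc t"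
  shows "(\<Sum>i<length as. (real t + real (as!i) - real i) gchoose (as!i)) = real (gotzmann_fun as t)"
  unfolding gotzmann_fun_def of_nat_sum
proof (intro sum.cong refl)
  fix i assume "i \<in> {..<length as}"
  then have "i \<le> t" using assms by auto
  then have "real t + real (as!i) - real i = real (t + as!i - i)" by (simp add: of_nat_diff)
  then show "(real t + real (as!i) - real i) gchoose (as!i) =
      real (if i \<le> t then (t + as!i - i) choose (as!i) else 0)"
    using \<open>i \<le> t\<close> by (simp add: binomial_gbinomial)
qed

lemma gotzmann_sum_poly:
  "\<exists>Q. \<forall>x::real. poly Q x = (\<Sum>i<length as. (x + real (as!i) - real i) gchoose (as!i))"
proof -
  define Q where "Q = (\<Sum>i<length as. smult (1 / fact (as!i))
      (\<Prod>j=0..<as!i. [:real (as!i) - real i - real j, 1:]))"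
  have "poly Q x = (\<Sum>i<length as. (x + real (as!i) - real i) gchoose (as!i))" for x
    unfolding Q_def poly_sum
    by (intro sum.cong refl) (simp add: poly_prod gbinomial_prod_rev algebra_simps)
  then show ?thesis by blast
qed

lemma gotzmann_decomp_of_eventually:
  assumes "sorted_wrt (\<ge>) as" and "\<forall>t\<ge>T. poly p (real t) = real (gotzmann_fun as t)"
  shows "gotzmann_decomp p as"
proof -
  obtain Q where Q: "\<And>x. poly Q x = (\<Sum>i<length as. (x + real (as!i) - real i) gchoose (as!i))"
    using gotzmann_sum_poly by blast
  have "poly (p - Q) (real t) = 0" if "max T (length as) \<le> t" for t
    using assms(2) gotzmann_sum_eq_fun[of as t] that by (simp add: Q)
  then have "real ` {max T (length as)..} \<subseteq> {x. poly (p - Q) x = 0}" by auto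
  moreover have "infinite (real ` {max T (length as)..})"
    using infinite_Ici by (simp add: finite_image_iff inj_on_def)
  ultimately have "p - Q = 0" using poly_roots_finite finite_subset by blast
  then show ?thesis unfolding gotzmann_decomp_def using assms(1) Q by simp
qed

lemma gotzmann_number_eq:
  assumes "gotzmann_decomp p as"
  shows "gotzmann_number p = length as"
  unfolding gotzmann_number_def
proof (rule the_equality)
  fix r assume "\<exists>bs. gotzmann_decomp p bs \<and> length bs = r"
  then obtain bs where bs: "gotzmann_decomp p bs" "length bs = r" by blast
  have "\<forall>t\<ge>length as + length bs. gotzmann_fun as t = gotzmann_fun bs t"
  proof (intro allI impI)
    fix t assume t: "length as + length bs \<le> t"
    have "real (gotzmann_fun as t) = poly p (real t)"
      using assms gotzmann_sum_eq_fun[of as t] t unfolding gotzmann_decomp_def by simp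
    also have "\<dots> = real (gotzmann_fun bs t)"
      using bs(1) gotzmann_sum_eq_fun[of bs t] t unfolding gotzmann_decomp_def by simp
    finally show "gotzmann_fun as t = gotzmann_fun bs t" by simp
  qed
  then have "as = bs"
    using assms bs(1) gotzmann_fun_eventually_eq_imp_eq unfolding gotzmann_decomp_def by blast
  then show "r = length as" using bs by simp
qed (use assms in blast)

section \<open>Hilbert functions of co-Borel sets of monomials\<close>

definition mons_from :: "nat \<Rightarrow> nat \<Rightarrow> (nat \<Rightarrow> nat) set" where
  "mons_from k n = {a. \<forall>i. (i < k \<or> n < i) \<longrightarrow> a i = 0}"

lemma mons_from_subset_mons: "mons_from k n \<subseteq> mons n"
  unfolding mons_from_def mons_def by auto

lemma mons_from_mdvd: "mdvd v u \<Longrightarrow> u \<in> mons_from k n \<Longrightarrow> v \<in> mons_from k n"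
  unfolding mons_from_def mdvd_def mem_Collect_eq by (metis le_zero_eq)

text \<open>The monomials outside a Borel-fixed ideal of \<open>K[x\<^sub>k,\<dots>,x\<^sub>n]\<close>.\<close>

definition co_borel :: "nat \<Rightarrow> nat \<Rightarrow> (nat \<Rightarrow> nat) set \<Rightarrow> bool" where
  "co_borel k n N \<longleftrightarrow> N \<subseteq> mons_from k n \<and> (\<forall>u\<in>N. \<forall>v. mdvd v u \<longrightarrow> v \<in> N) \<and>
     (\<forall>u\<in>N. \<forall>i j. k \<le> i \<and> i < j \<and> 0 < u j \<longrightarrow> mmove u j i \<in> N)"

lemma co_borel_mons_from: "co_borel k n N \<Longrightarrow> N \<subseteq> mons_from k n"
  unfolding co_borel_def by (rule conjunct1)

lemma co_borel_mdvd:
  assumes "co_borel k n N" "u \<in> N" "mdvd v u"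
  shows "v \<in> N"
  using assms(1)[unfolded co_borel_def, THEN conjunct2, THEN conjunct1] assms(2,3) by blast

lemma co_borel_mmove:
  assumes "co_borel k n N" "u \<in> N" "k \<le> i" "i < j" "0 < u j"
  shows "mmove u j i \<in> N"
  using assms(1)[unfolded co_borel_def, THEN conjunct2, THEN conjunct2] assms(2-5) by blast

definition count_upto :: "nat \<Rightarrow> (nat \<Rightarrow> nat) set \<Rightarrow> nat \<Rightarrow> nat" where
  "count_upto n N t = card {u \<in> N. mdeg n u \<le> t}"

text \<open>If \<open>N\<close> is the set of \<open>x\<^sub>0\<close>-free monomials outside a saturated ideal, \<open>count_upto n N\<close>
  is its Hilbert function, and the last clause says that the ideal is generated in degrees
  at most \<open>length as\<close>.\<close>

definition gotzmann_repr :: "nat \<Rightarrow> nat \<Rightarrow> (nat \<Rightarrow> nat) set \<Rightarrow> nat list \<Rightarrow> bool" where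
  "gotzmann_repr k n N as \<longleftrightarrow> sorted_wrt (\<ge>) as \<and>
     (\<forall>t. gotzmann_fun as t \<le> count_upto n N t) \<and>
     (\<forall>t. length as \<le> Suc t \<longrightarrow> count_upto n N t = gotzmann_fun as t) \<and>
     (\<forall>u\<in>mons_from k n. u \<notin> N \<longrightarrow> (\<exists>v. mdvd v u \<and> v \<notin> N \<and> mdeg n v \<le> length as))"

lemma finite_mdeg_le: "N \<subseteq> mons n \<Longrightarrow> finite {u \<in> N. mdeg n u \<le> t}"
  by (rule finite_subset[OF _ finite_mons_mdeg_le[of n t]]) blast

lemma card_mdvd_chain_le:
  assumes "mdvd h w" "w \<in> mons n" "finite D"
    and "\<And>c. mdvd h c \<Longrightarrow> mdvd c w \<Longrightarrow> mdeg n c \<le> t \<Longrightarrow> c \<in> D"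
  shows "Suc (min t (mdeg n w)) - mdeg n h \<le> card {c \<in> D. mdeg n c \<le> t}"
proof -
  define m where "m = min t (mdeg n w)"
  define f where "f e = (SOME c. mdvd h c \<and> mdvd c w \<and> mdeg n c = e)" for e
  have f: "mdvd h (f e) \<and> mdvd (f e) w \<and> mdeg n (f e) = e" if "e \<in> {mdeg n h..m}" for e
  proof -
    have "\<exists>c. mdvd h c \<and> mdvd c w \<and> mdeg n c = e"
      using that mdvd_intermediate_deg[OF assms(1,2)] by (auto simp: m_def)
    then show ?thesis unfolding f_def by (rule someI_ex)
  qed
  have "inj_on f {mdeg n h..m}"
    by (rule inj_onI) (metis f)
  moreover have "f ` {mdeg n h..m} \<subseteq> {c \<in> D. mdeg n c \<le> t}"
  proof
    fix c assume "c \<in> f ` {mdeg n h..m}"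
    then obtain e where e: "e \<in> {mdeg n h..m}" "c = f e" by auto
    then show "c \<in> {c \<in> D. mdeg n c \<le> t}" using f[OF e(1)] assms(4) by (auto simp: m_def)
  qed
  ultimately have "card {mdeg n h..m} \<le> card {c \<in> D. mdeg n c \<le> t}"
    using assms(3) by (intro card_inj_on_le) auto
  then show ?thesis by (simp add: m_def)
qed

lemma gotzmann_repr_last:
  assumes "co_borel (Suc n) n N"
  shows "\<exists>as. gotzmann_repr (Suc n) n N as"
proof -
  have z: "mons_from (Suc n) n = {\<lambda>_. 0}"
    unfolding mons_from_def by (auto simp: fun_eq_iff) (metis less_Suc_eq_le not_le)
  have md0: "mdeg n (\<lambda>_. 0) = 0" by (simp add: mdeg_def)
  have "N \<subseteq> mons_from (Suc n) n" by (rule co_borel_mons_from[OF assms])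
  with z have sub: "N \<subseteq> {\<lambda>_. 0}" by simp
  show ?thesis
  proof (cases "(\<lambda>_. 0) \<in> N")
    case True
    then have N: "N = {\<lambda>_. 0}" using sub by auto
    have "count_upto n N t = 1" for t
    proof -
      have "{u \<in> N. mdeg n u \<le> t} = {\<lambda>_. 0}" using md0 N by auto
      then show ?thesis unfolding count_upto_def by simp
    qed
    moreover have "gotzmann_fun [0] t = 1" for t unfolding gotzmann_fun_def by simp
    moreover have "\<forall>u\<in>mons_from (Suc n) n. u \<in> N" using z N by simp
    ultimately show ?thesis unfolding gotzmann_repr_def by (intro exI[of _ "[0]"]) simp
  next
    case False
    then have N: "N = {}" using sub by auto
    have "count_upto n N t = 0" "gotzmann_fun [] t = 0" for t
      unfolding count_upto_def gotzmann_fun_def N by simp_all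
    moreover have "\<exists>v. mdvd v u \<and> v \<notin> N \<and> mdeg n v \<le> 0" for u
      using N md0 by (intro exI[of _ "\<lambda>_. 0"]) (simp add: mdvd_def)
    ultimately show ?thesis unfolding gotzmann_repr_def by (intro exI[of _ "[]"]) simp
  qed
qed

lemma co_borel_collapse:
  assumes "co_borel k n N" "k \<le> n"
  shows "u \<in> N \<Longrightarrow> mdvd h u \<Longrightarrow> h k = 0 \<Longrightarrow> h(k := mdeg n u - mdeg n h) \<in> N"
proof (induction "\<Sum>i\<in>{..n}-{k}. u i - h i" arbitrary: u rule: less_induct)
  case less
  have uN: "u \<in> mons_from k n" using less.prems(1) co_borel_mons_from[OF assms(1)] by blast
  show ?case
  proof (cases "\<forall>i\<in>{..n}-{k}. u i = h i")
    case True
    have u: "u = h(k := u k)"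
    proof
      fix i show "u i = (h(k := u k)) i"
      proof (cases "i \<le> n")
        case False
        then have "u i = 0" using uN unfolding mons_from_def by auto
        moreover have "h i \<le> u i" using less.prems unfolding mdvd_def by auto
        ultimately show ?thesis using False assms(2) by auto
      qed (use True in auto)
    qed
    have "mdeg n u = mdeg n h + u k"
      using mdeg_fun_upd[OF assms(2), of h "u k"] less.prems(3) by (simp only: u[symmetric])
    then have "h(k := mdeg n u - mdeg n h) = u" using u by simp
    then show ?thesis using less.prems(1) by simp
  next
    case False
    then obtain i where i: "i \<in> {..n}-{k}" "u i \<noteq> h i" by auto
    with less.prems(2) have lt: "h i < u i" unfolding mdvd_def by (simp add: le_neq_implies_less)
    have "k \<le> i"
    proof (rule ccontr)
      assume "\<not> k \<le> i"
      then have "u i = 0" using uN unfolding mons_from_def by auto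
      with lt show False by simp
    qed
    with i have ki: "k < i" by auto
    define u' where "u' = mmove u i k"
    have "u' \<in> N" unfolding u'_def using lt ki by (intro co_borel_mmove[OF assms(1) less.prems(1)]) auto
    moreover have "mdvd h u'" using less.prems lt ki unfolding mdvd_def u'_def mmove_def by auto
    moreover have "mdeg n u' = mdeg n u" unfolding u'_def
      using lt i assms(2) by (intro mdeg_mmove) auto
    moreover have "(\<Sum>i\<in>{..n}-{k}. u' i - h i) < (\<Sum>i\<in>{..n}-{k}. u i - h i)"
      using i lt unfolding u'_def mmove_def by (intro sum_strict_mono_ex1) auto
    ultimately show ?thesis using less.hyps[of u'] less.prems by simp
  qed
qed

text \<open>If \<open>N\<close> is the complement of the ideal \<open>J\<close>, then \<open>ray_stable k N\<close> is the complement of the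
  saturation \<open>J : x\<^sub>k\<^sup>\<infinity>\<close>, and \<open>ray_section k N\<close> is that of its restriction to \<open>x\<^sub>k = 0\<close>.\<close>

definition ray_stable :: "nat \<Rightarrow> (nat \<Rightarrow> nat) set \<Rightarrow> (nat \<Rightarrow> nat) set" where
  "ray_stable k N = {u \<in> N. \<forall>j. u(k := u k + j) \<in> N}"

definition ray_section :: "nat \<Rightarrow> (nat \<Rightarrow> nat) set \<Rightarrow> (nat \<Rightarrow> nat) set" where
  "ray_section k N = {u \<in> ray_stable k N. u k = 0}"

lemma ray_section_mdvd:
  assumes "co_borel k n N" "u \<in> ray_section k N" "mdvd v u"
  shows "v \<in> ray_section k N"
proof -
  note div = co_borel_mdvd[OF assms(1)]
  have "v k \<le> u k" using assms(3) by (simp add: mdvd_def)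
  moreover have "u k = 0" using assms(2) by (simp add: ray_section_def)
  ultimately have vk: "v k = 0" by simp
  have "u(k := u k + j) \<in> N" for j using assms(2) unfolding ray_section_def ray_stable_def by blast
  moreover have "mdvd (v(k := v k + j)) (u(k := u k + j))" for j using assms(3) by (simp add: mdvd_def)
  ultimately have "v(k := v k + j) \<in> N" for j using div by blast
  moreover have "v \<in> N" using assms(2,3) div unfolding ray_section_def ray_stable_def by blast
  ultimately show ?thesis using vk by (simp add: ray_section_def ray_stable_def)
qed

lemma co_borel_ray_section:
  assumes "co_borel k n N"
  shows "co_borel (Suc k) n (ray_section k N)"
  unfolding co_borel_def
proof (intro conjI ballI allI impI)
  show "ray_section k N \<subseteq> mons_from (Suc k) n"
    using co_borel_mons_from[OF assms] unfolding ray_section_def ray_stable_def mons_from_def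
    by (auto simp: less_Suc_eq)
next
  fix u v assume "u \<in> ray_section k N" "mdvd v u"
  then show "v \<in> ray_section k N" by (rule ray_section_mdvd[OF assms])
next
  fix u i j assume u: "u \<in> ray_section k N" and ij: "Suc k \<le> i \<and> i < j \<and> 0 < u j"
  have "k \<le> i" using ij by simp
  then have move: "\<And>w. w \<in> N \<Longrightarrow> 0 < w j \<Longrightarrow> mmove w j i \<in> N"
    using co_borel_mmove[OF assms] ij by blast
  have "(mmove u j i)(k := (mmove u j i) k + l) = mmove (u(k := u k + l)) j i" for l
    using ij unfolding mmove_def by (auto simp: fun_eq_iff)
  moreover have "mmove (u(k := u k + l)) j i \<in> N" "mmove u j i \<in> N" for l
    using u ij move unfolding ray_section_def ray_stable_def by auto
  moreover have "(mmove u j i) k = 0" using u ij unfolding ray_section_def mmove_def by auto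
  ultimately show "mmove u j i \<in> ray_section k N"
    unfolding ray_section_def ray_stable_def by simp
qed

lemma ray_stable_iff_section:
  assumes "co_borel k n N"
  shows "u \<in> ray_stable k N \<longleftrightarrow> u(k := 0) \<in> ray_section k N"
proof
  assume u: "u \<in> ray_stable k N"
  have "(u(k := 0))(k := j) \<in> N" for j
  proof (cases "j \<le> u k")
    case True
    then have "mdvd ((u(k := 0))(k := j)) u" unfolding mdvd_def by auto
    then show ?thesis using u co_borel_mdvd[OF assms] unfolding ray_stable_def by blast
  next
    case False
    have "u(k := u k + (j - u k)) \<in> N" using u unfolding ray_stable_def by blast
    then show ?thesis using False by simp
  qed
  then show "u(k := 0) \<in> ray_section k N" unfolding ray_section_def ray_stable_def by simp
next
  assume "u(k := 0) \<in> ray_section k N"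
  then have ray: "(u(k := 0))(k := j) \<in> N" for j unfolding ray_section_def ray_stable_def by simp
  have "u \<in> N" using ray[of "u k"] by simp
  moreover have "u(k := u k + j) \<in> N" for j using ray[of "u k + j"] by simp
  ultimately show "u \<in> ray_stable k N" unfolding ray_stable_def by blast
qed

lemma not_ray_stable_above:
  assumes "co_borel k n N" "mdvd h c" "h k = 0" "h \<notin> ray_section k N"
  shows "c \<notin> ray_stable k N"
  using assms ray_section_mdvd ray_stable_iff_section mdvd_fun_upd_0_iff by blast

lemma co_borel_subset_mons:
  assumes "co_borel k n N"
  shows "N \<subseteq> mons n"
  using co_borel_mons_from[OF assms] mons_from_subset_mons by (rule order_trans)

lemma ray_stable_subset: "ray_stable k N \<subseteq> N"
  unfolding ray_stable_def by (rule Collect_restrict)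

lemma card_ray_stable_deg:
  assumes "co_borel k n N" "k \<le> n"
  shows "card {u \<in> ray_stable k N. mdeg n u = s} = count_upto n (ray_section k N) s"
  unfolding count_upto_def
  by (rule card_mdeg_eq_dehomogenize[OF assms(2) ray_stable_iff_section[OF assms(1)]])
    (simp add: ray_section_def)

lemma count_upto_ray_stable:
  assumes "co_borel k n N" "k \<le> n"
  shows "count_upto n (ray_stable k N) t = (\<Sum>s\<le>t. count_upto n (ray_section k N) s)"
proof (induction t)
  case 0
  have "count_upto n (ray_stable k N) 0 = card {u \<in> ray_stable k N. mdeg n u = 0}"
    unfolding count_upto_def by (rule arg_cong[where f = card]) auto
  then show ?case using card_ray_stable_deg[OF assms, of 0] by simp
next
  case (Suc t)
  have sub: "ray_stable k N \<subseteq> mons n"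
    using co_borel_subset_mons[OF assms(1)] ray_stable_subset by blast
  have "count_upto n (ray_stable k N) (Suc t) =
      card ({u \<in> ray_stable k N. mdeg n u \<le> t} \<union> {u \<in> ray_stable k N. mdeg n u = Suc t})"
    unfolding count_upto_def by (rule arg_cong[where f = card]) auto
  also have "\<dots> = count_upto n (ray_stable k N) t + card {u \<in> ray_stable k N. mdeg n u = Suc t}"
    unfolding count_upto_def
  proof (rule card_Un_disjoint)
    show "finite {u \<in> ray_stable k N. mdeg n u = Suc t}"
      by (rule finite_subset[OF _ finite_mdeg_le[OF sub, of "Suc t"]]) auto
  qed (use finite_mdeg_le[OF sub, of t] in auto)
  also have "\<dots> = (\<Sum>s\<le>Suc t. count_upto n (ray_section k N) s)"
    using Suc card_ray_stable_deg[OF assms, of "Suc t"] by simp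
  finally show ?case .
qed


text \<open>The induction step: a representation \<open>bs\<close> for the section in \<open>x\<^sub>k\<^sub>+\<^sub>1,\<dots>,x\<^sub>n\<close> gives
  \<open>map Suc bs\<close> followed by a block of zeros for \<open>N\<close>.\<close>

locale gotzmann_step =
  fixes k n :: nat and N :: "(nat \<Rightarrow> nat) set" and bs :: "nat list"
  assumes k_le_n: "k \<le> n"
    and co_borel_N: "co_borel k n N"
    and repr_section: "gotzmann_repr (Suc k) n (ray_section k N) bs"
begin

definition unstable :: "(nat \<Rightarrow> nat) set" where
  "unstable = N - ray_stable k N"

definition excess :: nat where
  "excess = (\<Sum>s<length bs. count_upto n (ray_section k N) s - gotzmann_fun bs s)"

lemma N_mdvd: "u \<in> N \<Longrightarrow> mdvd v u \<Longrightarrow> v \<in> N"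
  by (rule co_borel_mdvd[OF co_borel_N])

lemma bs_sorted: "sorted_wrt (\<ge>) bs"
  using repr_section unfolding gotzmann_repr_def by blast

lemma section_ge: "gotzmann_fun bs t \<le> count_upto n (ray_section k N) t"
  using repr_section unfolding gotzmann_repr_def by blast

lemma section_eq: "length bs \<le> Suc t \<Longrightarrow> count_upto n (ray_section k N) t = gotzmann_fun bs t"
  using repr_section unfolding gotzmann_repr_def by blast

lemma N_mons: "N \<subseteq> mons n"
  using co_borel_subset_mons[OF co_borel_N] .

lemma section_witness:
  assumes "u \<in> mons_from k n" "u \<notin> ray_stable k N"
  obtains h where "mdvd h u" "h k = 0" "h \<notin> ray_section k N" "mdeg n h \<le> length bs"
proof -
  have "u(k := 0) \<in> mons_from (Suc k) n"
    using assms(1) unfolding mons_from_def by (auto simp: less_Suc_eq)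
  moreover have "u(k := 0) \<notin> ray_section k N"
    using assms(2) ray_stable_iff_section[OF co_borel_N] by blast
  ultimately obtain h where "mdvd h (u(k := 0))" "h \<notin> ray_section k N" "mdeg n h \<le> length bs"
    using repr_section unfolding gotzmann_repr_def by blast
  then show ?thesis using that mdvd_fun_upd_0_iff by blast
qed

lemma unstable_chain:
  assumes "u \<in> unstable"
  obtains h where "mdvd h u" "h k = 0" "h \<notin> ray_section k N" "mdeg n h \<le> length bs"
    and "\<And>c. mdvd h c \<Longrightarrow> mdvd c u \<Longrightarrow> c \<in> unstable"
proof -
  have u: "u \<in> N" "u \<notin> ray_stable k N" using assms unfolding unstable_def by auto
  then have "u \<in> mons_from k n" using co_borel_mons_from[OF co_borel_N] by blast
  then obtain h where h: "mdvd h u" "h k = 0" "h \<notin> ray_section k N" "mdeg n h \<le> length bs"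
    using section_witness u(2) by blast
  have "c \<in> unstable" if "mdvd h c" "mdvd c u" for c
    using N_mdvd[OF u(1) that(2)] not_ray_stable_above[OF co_borel_N that(1) h(2,3)]
    unfolding unstable_def by blast
  then show ?thesis using that h by blast
qed

text \<open>An unstable \<open>u\<close> lies over some \<open>h\<close> of degree at most \<open>length bs\<close> whose \<open>x\<^sub>k\<close>-ray leaves \<open>N\<close>;
  pushing \<open>u\<close> onto that ray (by \<open>co_borel_collapse\<close>) bounds \<open>mdeg n u - mdeg n h\<close>.\<close>

lemma finite_unstable: "finite unstable"
proof -
  define B where "B h = (LEAST j. h(k := j) \<notin> N)" for h
  define Bm where "Bm = Max (insert 0 (B ` {h \<in> mons n. mdeg n h \<le> length bs}))"
  have "unstable \<subseteq> {u \<in> mons n. mdeg n u \<le> length bs + Bm}"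
  proof
    fix u assume uD: "u \<in> unstable"
    then have uN: "u \<in> N" unfolding unstable_def by auto
    have um: "u \<in> mons n" using uN N_mons by blast
    obtain h where h: "mdvd h u" "h k = 0" "h \<notin> ray_section k N" "mdeg n h \<le> length bs"
      using unstable_chain[OF uD] by blast
    have "h \<notin> ray_stable k N" using h(2,3) unfolding ray_section_def by auto
    then obtain j where "h(k := h k + j) \<notin> N" using N_mdvd[OF uN h(1)] unfolding ray_stable_def by blast
    then have hB: "h(k := B h) \<notin> N" unfolding B_def by (rule LeastI)
    have "mdeg n u - mdeg n h < B h"
    proof (rule ccontr)
      assume "\<not> mdeg n u - mdeg n h < B h"
      then have "mdvd (h(k := B h)) (h(k := mdeg n u - mdeg n h))" unfolding mdvd_def by auto
      then show False using N_mdvd co_borel_collapse[OF co_borel_N k_le_n uN h(1,2)] hB by blast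
    qed
    moreover have "B h \<le> Bm"
      unfolding Bm_def using h(4) mons_mdvd[OF h(1) um] finite_mons_mdeg_le by (intro Max_ge) auto
    ultimately show "u \<in> {u \<in> mons n. mdeg n u \<le> length bs + Bm}" using um h(4) by auto
  qed
  then show ?thesis using finite_mons_mdeg_le finite_subset by blast
qed

lemma count_upto_N:
  "count_upto n N t = (\<Sum>s\<le>t. count_upto n (ray_section k N) s) + card {u \<in> unstable. mdeg n u \<le> t}"
proof -
  have "{u \<in> N. mdeg n u \<le> t} = {u \<in> ray_stable k N. mdeg n u \<le> t} \<union> {u \<in> unstable. mdeg n u \<le> t}"
    unfolding unstable_def ray_stable_def by auto
  moreover have "ray_stable k N \<subseteq> mons n" "unstable \<subseteq> mons n"
    using N_mons unfolding unstable_def ray_stable_def by auto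
  then have "finite {u \<in> ray_stable k N. mdeg n u \<le> t}" "finite {u \<in> unstable. mdeg n u \<le> t}"
    by (simp_all add: finite_mdeg_le)
  moreover have "{u \<in> ray_stable k N. mdeg n u \<le> t} \<inter> {u \<in> unstable. mdeg n u \<le> t} = {}"
    unfolding unstable_def by auto
  ultimately show ?thesis
    using count_upto_ray_stable[OF co_borel_N k_le_n] unfolding count_upto_def
    by (simp add: card_Un_disjoint)
qed

lemma sum_count_upto_section_ge:
  "gotzmann_fun (map Suc bs) t \<le> (\<Sum>s\<le>t. count_upto n (ray_section k N) s)"
proof -
  have "(\<Sum>s\<le>t. gotzmann_fun bs s) \<le> (\<Sum>s\<le>t. count_upto n (ray_section k N) s)"
    using section_ge by (rule sum_mono)
  then show ?thesis by (simp add: sum_gotzmann_fun)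
qed

lemma sum_count_upto_section:
  assumes "length bs \<le> Suc t"
  shows "(\<Sum>s\<le>t. count_upto n (ray_section k N) s) = gotzmann_fun (map Suc bs) t + excess"
proof -
  define f where "f s = count_upto n (ray_section k N) s - gotzmann_fun bs s" for s
  have count: "count_upto n (ray_section k N) s = gotzmann_fun bs s + f s" for s
    using section_ge[of s] unfolding f_def by simp
  have zero: "f s = 0" if "length bs \<le> Suc s" for s
    using section_eq[OF that] unfolding f_def by simp
  have "(\<Sum>s\<le>t. f s) = (\<Sum>s<length bs. f s)"
  proof (rule sum.mono_neutral_right)
    show "{..<length bs} \<subseteq> {..t}" using assms by auto
    show "\<forall>s\<in>{..t} - {..<length bs}. f s = 0" using zero by simp
  qed simp
  also have "\<dots> = excess" unfolding excess_def f_def ..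
  moreover have "(\<Sum>s\<le>t. count_upto n (ray_section k N) s) = (\<Sum>s\<le>t. gotzmann_fun bs s) + (\<Sum>s\<le>t. f s)"
    by (simp only: count sum.distrib)
  ultimately show ?thesis by (simp add: sum_gotzmann_fun)
qed

lemma card_unstable_mdeg_le:
  "min (card unstable) (Suc t - length bs) \<le> card {u \<in> unstable. mdeg n u \<le> t}"
proof (cases "\<forall>u\<in>unstable. mdeg n u \<le> t")
  case True
  then have "{u \<in> unstable. mdeg n u \<le> t} = unstable" by auto
  then show ?thesis by simp
next
  case False
  then obtain u where uD: "u \<in> unstable" and ut: "t < mdeg n u" by auto
  obtain h where h: "mdvd h u" "mdeg n h \<le> length bs" "\<And>c. mdvd h c \<Longrightarrow> mdvd c u \<Longrightarrow> c \<in> unstable"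
    using unstable_chain[OF uD] by blast
  have "u \<in> mons n" using uD N_mons unfolding unstable_def by blast
  then have "Suc (min t (mdeg n u)) - mdeg n h \<le> card {u \<in> unstable. mdeg n u \<le> t}"
    using card_mdvd_chain_le[OF h(1) _ finite_unstable] h(3) by blast
  then show ?thesis using ut h(2) by simp
qed

lemma mdeg_unstable_less:
  assumes "u \<in> unstable"
  shows "mdeg n u < length bs + card unstable"
proof -
  obtain h where h: "mdvd h u" "mdeg n h \<le> length bs" "\<And>c. mdvd h c \<Longrightarrow> mdvd c u \<Longrightarrow> c \<in> unstable"
    using unstable_chain[OF assms] by blast
  have "u \<in> mons n" using assms N_mons unfolding unstable_def by blast
  then have "Suc (min (mdeg n u) (mdeg n u)) - mdeg n h \<le> card {c \<in> unstable. mdeg n c \<le> mdeg n u}"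
    using card_mdvd_chain_le[OF h(1) _ finite_unstable] h(3) by blast
  moreover have "card {c \<in> unstable. mdeg n c \<le> mdeg n u} \<le> card unstable"
    using finite_unstable by (intro card_mono) auto
  ultimately show ?thesis using h(2) by simp
qed

text \<open>A non-member of least degree above the witness \<open>h\<close> has all its proper divisors above \<open>h\<close>
  in \<open>unstable\<close>, which therefore bounds the length of that chain.\<close>

lemma nonmember_low_divisor:
  assumes "u \<in> mons_from k n" "u \<notin> N"
  shows "\<exists>v. mdvd v u \<and> v \<notin> N \<and> mdeg n v \<le> length bs + card unstable"
proof -
  have "u \<notin> ray_stable k N" using assms(2) unfolding ray_stable_def by blast
  then obtain h where h: "mdvd h u" "h k = 0" "h \<notin> ray_section k N" "mdeg n h \<le> length bs"
    using section_witness[OF assms(1)] by blast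
  define S where "S = {c. mdvd h c \<and> mdvd c u \<and> c \<notin> N}"
  obtain v where v: "v \<in> S" and vmin: "\<And>c. c \<in> S \<Longrightarrow> mdeg n v \<le> mdeg n c"
    using ex_has_least_nat[of "\<lambda>c. c \<in> S" u "mdeg n"] h(1) assms(2) unfolding S_def by auto
  have hv: "mdvd h v" "mdvd v u" "v \<notin> N" using v unfolding S_def by auto
  have "mdeg n v \<le> length bs + card unstable"
  proof (cases "mdeg n v = 0")
    case False
    have vm: "v \<in> mons n" using mons_mdvd[OF hv(2)] assms(1) mons_from_subset_mons by blast
    have "Suc (min (mdeg n v - 1) (mdeg n v)) - mdeg n h \<le> card {c \<in> unstable. mdeg n c \<le> mdeg n v - 1}"
    proof (rule card_mdvd_chain_le[OF hv(1) vm finite_unstable])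
      fix c assume c: "mdvd h c" "mdvd c v" "mdeg n c \<le> mdeg n v - 1"
      have "c \<in> N"
        using vmin[of c] c False mdvd_trans[OF c(2) hv(2)] unfolding S_def by fastforce
      then show "c \<in> unstable"
        using not_ray_stable_above[OF co_borel_N c(1) h(2,3)] unfolding unstable_def by blast
    qed
    moreover have "card {c \<in> unstable. mdeg n c \<le> mdeg n v - 1} \<le> card unstable"
      using finite_unstable by (intro card_mono) auto
    ultimately show ?thesis using h(4) False by simp
  qed simp
  then show ?thesis using hv by blast
qed

lemma gotzmann_repr_exists: "\<exists>as. gotzmann_repr k n N as"
proof -
  define z where "z = excess + card unstable"
  define as where "as = map Suc bs @ replicate z 0"
  have len: "length as = length bs + z" unfolding as_def by simp
  have gf: "gotzmann_fun as t = gotzmann_fun (map Suc bs) t + min z (Suc t - length bs)" for t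
    unfolding as_def by (simp add: gotzmann_fun_append_zeros)
  have "sorted_wrt (\<ge>) (replicate z (0::nat))" by (induction z) auto
  then have "sorted_wrt (\<ge>) as"
    using bs_sorted unfolding as_def by (auto simp: sorted_wrt_append sorted_wrt_map)
  moreover have "gotzmann_fun as t \<le> count_upto n N t" for t
  proof (cases "length bs \<le> Suc t")
    case True
    have "min z (Suc t - length bs) \<le> excess + min (card unstable) (Suc t - length bs)"
      unfolding z_def by simp
    then show ?thesis
      using gf count_upto_N sum_count_upto_section[OF True] card_unstable_mdeg_le[of t] by simp
  next
    case False
    then show ?thesis using gf count_upto_N sum_count_upto_section_ge[of t] by simp
  qed
  moreover have "count_upto n N t = gotzmann_fun as t" if "length as \<le> Suc t" for t
  proof -
    have "{u \<in> unstable. mdeg n u \<le> t} = unstable"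
      using mdeg_unstable_less that len unfolding z_def by fastforce
    then show ?thesis
      using gf count_upto_N sum_count_upto_section[of t] that len unfolding z_def by simp
  qed
  moreover have "\<exists>v. mdvd v u \<and> v \<notin> N \<and> mdeg n v \<le> length as"
    if "u \<in> mons_from k n" "u \<notin> N" for u
    using nonmember_low_divisor[OF that] len unfolding z_def by fastforce
  ultimately show ?thesis unfolding gotzmann_repr_def by blast
qed

end

lemma co_borel_gotzmann_repr:
  assumes "k \<le> Suc n" "co_borel k n N"
  shows "\<exists>as. gotzmann_repr k n N as"
  using assms
proof (induction k arbitrary: N rule: inc_induct)
  case base
  then show ?case by (rule gotzmann_repr_last)
next
  case (step k)
  then obtain bs where "gotzmann_repr (Suc k) n (ray_section k N) bs"
    using co_borel_ray_section by blast
  then interpret gotzmann_step k n N bs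
    using step by unfold_locales auto
  show ?case by (rule gotzmann_repr_exists)
qed


section \<open>Saturated Borel-fixed ideals\<close>

lemma borel_fixed_mon_ideal: "borel_fixed n J \<Longrightarrow> mon_ideal n J"
  unfolding borel_fixed_def by (rule conjunct1)

lemma mon_ideal_subset_mons: "mon_ideal n J \<Longrightarrow> J \<subseteq> mons n"
  unfolding mon_ideal_def by (rule conjunct1)

lemma mon_ideal_add:
  assumes "mon_ideal n J" "a \<in> J" "b \<in> mons n"
  shows "(\<lambda>i. a i + b i) \<in> J"
  using assms(1)[unfolded mon_ideal_def, THEN conjunct2] assms(2,3) by blast

lemma mon_ideal_mdvd:
  assumes "mon_ideal n J" "a \<in> J" "b \<in> mons n" "mdvd a b"
  shows "b \<in> J"
proof -
  have "(\<lambda>i. b i - a i) \<in> mons n" using assms(3) unfolding mons_def by auto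
  then have "(\<lambda>i. a i + (b i - a i)) \<in> J" by (rule mon_ideal_add[OF assms(1,2)])
  moreover have "(\<lambda>i. a i + (b i - a i)) = b" using assms(4) unfolding mdvd_def by auto
  ultimately show ?thesis by simp
qed

lemma borel_fixed_mmove:
  assumes "borel_fixed n J" "a \<in> J" "0 < a i" "i < j" "j \<le> n"
  shows "mmove a i j \<in> J"
  using assms(1)[unfolded borel_fixed_def, THEN conjunct2] assms(2-5) by blast

text \<open>If \<open>x\<^sub>0 b \<in> J\<close>, Borel moves give \<open>x\<^sub>i b \<in> J\<close> for every \<open>i\<close>, so \<open>b\<close> lies in the saturation.\<close>

lemma saturated_borel_div_x0:
  assumes bf: "borel_fixed n J" and sat: "msat n J = J"
    and b: "b \<in> mons n" and bx0: "b(0 := b 0 + 1) \<in> J"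
  shows "b \<in> J"
proof -
  have mi: "mon_ideal n J" using bf by (rule borel_fixed_mon_ideal)
  have "(\<lambda>i. b i + m i) \<in> J" if m: "m \<in> mons_deg n 1" for m
  proof -
    have mm: "m \<in> mons n" "mdeg n m = 1" using m unfolding mons_deg_def by auto
    then obtain i where i: "i \<le> n" "0 < m i" unfolding mdeg_def
      by (metis atMost_iff gr0I sum.neutral zero_neq_one)
    have bm: "(\<lambda>i. b i + m i) \<in> mons n" using b mm unfolding mons_def by auto
    show ?thesis
    proof (cases "i = 0")
      case True
      have "mdvd (b(0 := b 0 + 1)) (\<lambda>i. b i + m i)" using True i unfolding mdvd_def by auto
      then show ?thesis using mon_ideal_mdvd[OF mi bx0 bm] by blast
    next
      case False
      then have "mmove (b(0 := b 0 + 1)) 0 i \<in> J"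
        using i by (intro borel_fixed_mmove[OF bf bx0]) auto
      moreover have "mdvd (mmove (b(0 := b 0 + 1)) 0 i) (\<lambda>i. b i + m i)"
        using False i unfolding mdvd_def mmove_def by auto
      ultimately show ?thesis using mon_ideal_mdvd[OF mi _ bm] by blast
    qed
  qed
  then have "b \<in> msat n J" using b unfolding msat_def by blast
  then show ?thesis using sat by simp
qed

lemma saturated_borel_fun_upd_0:
  assumes bf: "borel_fixed n J" and sat: "msat n J = J" and a: "a \<in> J"
  shows "a(0 := 0) \<in> J"
proof -
  have key: "b \<in> J" if "b \<in> mons n" "b(0 := b 0 + j) \<in> J" for b j
    using that
  proof (induction j)
    case (Suc j)
    have "(b(0 := b 0 + j))(0 := (b(0 := b 0 + j)) 0 + 1) = b(0 := b 0 + Suc j)" by simp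
    then have "(b(0 := b 0 + j))(0 := (b(0 := b 0 + j)) 0 + 1) \<in> J" using Suc.prems(2) by (simp only:)
    moreover have "b(0 := b 0 + j) \<in> mons n" using Suc.prems(1) unfolding mons_def by auto
    ultimately show ?case using Suc.IH Suc.prems(1) saturated_borel_div_x0[OF bf sat] by blast
  qed simp
  have "a \<in> mons n" using a mon_ideal_subset_mons[OF borel_fixed_mon_ideal[OF bf]] by blast
  then have "a(0 := 0) \<in> mons n" unfolding mons_def by auto
  then show ?thesis by (rule key[where j = "a 0"]) (simp add: a)
qed

lemma co_borel_complement:
  assumes bf: "borel_fixed n J"
  shows "co_borel 1 n (mons_from 1 n - J)"
  unfolding co_borel_def
proof (intro conjI ballI allI impI)
  show "mons_from 1 n - J \<subseteq> mons_from 1 n" by blast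
next
  fix u v assume u: "u \<in> mons_from 1 n - J" and v: "mdvd v u"
  have "v \<notin> J"
    using u mon_ideal_mdvd[OF borel_fixed_mon_ideal[OF bf] _ _ v] mons_from_subset_mons by blast
  then show "v \<in> mons_from 1 n - J" using u v mons_from_mdvd by blast
next
  fix u i j assume u: "u \<in> mons_from 1 n - J" and ij: "1 \<le> i \<and> i < j \<and> 0 < u j"
  have jn: "j \<le> n"
  proof (rule ccontr)
    assume "\<not> j \<le> n"
    then have "u j = 0" using u unfolding mons_from_def by auto
    then show False using ij by simp
  qed
  have "mmove u j i \<in> mons_from 1 n" using u ij jn unfolding mons_from_def mmove_def by auto
  moreover have "mmove u j i \<notin> J"
  proof
    assume "mmove u j i \<in> J"
    then have "mmove (mmove u j i) i j \<in> J"
      by (rule borel_fixed_mmove[OF bf]) (use ij jn in \<open>auto simp: mmove_def\<close>)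
    moreover have "mmove (mmove u j i) i j = u" using ij unfolding mmove_def by (auto simp: fun_eq_iff)
    ultimately show False using u by simp
  qed
  ultimately show "mmove u j i \<in> mons_from 1 n - J" by blast
qed

lemma hilb_fun_saturated_borel:
  assumes bf: "borel_fixed n J" and sat: "msat n J = J"
  shows "hilb_fun n J t = count_upto n (mons_from 1 n - J) t"
proof -
  have mi: "mon_ideal n J" using bf by (rule borel_fixed_mon_ideal)
  have iff: "a \<in> mons n - J \<longleftrightarrow> a(0 := 0) \<in> mons_from 1 n - J" for a
  proof -
    have "a \<in> mons n \<longleftrightarrow> a(0 := 0) \<in> mons_from 1 n" unfolding mons_def mons_from_def by auto
    moreover have "a(0 := 0) \<in> J" if "a \<in> J" using saturated_borel_fun_upd_0[OF bf sat that] .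
    moreover have "a \<in> J" if "a(0 := 0) \<in> J" "a \<in> mons n"
      using mon_ideal_mdvd[OF mi that] by (auto simp: mdvd_def)
    ultimately show ?thesis by blast
  qed
  have "card {a \<in> mons n - J. mdeg n a = t} = card {v \<in> mons_from 1 n - J. mdeg n v \<le> t}"
    by (rule card_mdeg_eq_dehomogenize[where k = 0, OF _ iff]) (auto simp: mons_from_def)
  moreover have "mons_deg n t - J = {a \<in> mons n - J. mdeg n a = t}" unfolding mons_deg_def by auto
  ultimately show ?thesis unfolding hilb_fun_def count_upto_def by simp
qed

lemma saturated_borel_gotzmann:
  assumes bf: "borel_fixed n J" and sat: "msat n J = J" and hp: "has_hilb_poly n J p"
  obtains as where "gotzmann_decomp p as"
    and "\<And>a. a \<in> J \<Longrightarrow> \<exists>v. mdvd v a \<and> v \<in> J \<and> mdeg n v \<le> length as"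
proof -
  obtain as where as: "gotzmann_repr 1 n (mons_from 1 n - J) as"
    using co_borel_gotzmann_repr[OF _ co_borel_complement[OF bf]] by auto
  obtain t0 where t0: "\<forall>t\<ge>t0. real (hilb_fun n J t) = poly p (real t)"
    using hp unfolding has_hilb_poly_def by blast
  have "poly p (real t) = real (gotzmann_fun as t)" if "t0 + length as \<le> t" for t
  proof -
    have "real (hilb_fun n J t) = poly p (real t)" using t0 that by simp
    moreover have "hilb_fun n J t = gotzmann_fun as t"
      using hilb_fun_saturated_borel[OF bf sat, of t] as that unfolding gotzmann_repr_def by simp
    ultimately show ?thesis by simp
  qed
  then have "gotzmann_decomp p as"
    using as unfolding gotzmann_repr_def by (intro gotzmann_decomp_of_eventually) auto
  moreover have "\<exists>v. mdvd v a \<and> v \<in> J \<and> mdeg n v \<le> length as" if a: "a \<in> J" for a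
  proof -
    have "a \<in> mons n" using a mon_ideal_subset_mons[OF borel_fixed_mon_ideal[OF bf]] by blast
    then have "a(0 := 0) \<in> mons_from 1 n" unfolding mons_def mons_from_def by auto
    moreover have "a(0 := 0) \<in> J" using saturated_borel_fun_upd_0[OF bf sat a] .
    ultimately obtain v where v: "mdvd v (a(0 := 0))" "v \<notin> mons_from 1 n - J" "mdeg n v \<le> length as"
      using as unfolding gotzmann_repr_def by blast
    have "v \<in> mons_from 1 n" using mons_from_mdvd[OF v(1)] \<open>a(0 := 0) \<in> mons_from 1 n\<close> .
    then show ?thesis using v mdvd_fun_upd_0_iff by blast
  qed
  ultimately show ?thesis using that by blast
qed


section \<open>The Borel order\<close>

lemma borel_le_mmove:
  assumes s: "s \<in> mons n" "0 < s i" and ij: "i < j" "j \<le> n"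
  shows "borel_le n s (mmove s i j)"
  using ij
proof (induction j)
  case (Suc j)
  show ?case
  proof (cases "j = i")
    case True
    then have "borel_step n s (mmove s i (Suc i))"
      unfolding borel_step_def using s Suc.prems by (intro conjI exI[of _ i]) auto
    then show ?thesis unfolding borel_le_def using True by simp
  next
    case False
    then have ij': "i < j" "j \<le> n" using Suc.prems by auto
    have "borel_step n (mmove s i j) (mmove (mmove s i j) j (Suc j))"
      unfolding borel_step_def using mmove_mons[OF s(1)] Suc.prems ij'
      by (intro conjI exI[of _ j]) (auto simp: mmove_def)
    moreover have "mmove (mmove s i j) j (Suc j) = mmove s i (Suc j)"
      using ij' unfolding mmove_def by (auto simp: fun_eq_iff)
    ultimately have "borel_step n (mmove s i j) (mmove s i (Suc j))" by simp
    then show ?thesis using Suc.IH[OF ij'] unfolding borel_le_def by simp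
  qed
qed simp

lemma borel_le_of_le_but_x0:
  assumes b: "b \<in> mons n"
  shows "s \<in> mons n \<Longrightarrow> mdeg n s = mdeg n b \<Longrightarrow> \<forall>i>0. s i \<le> b i \<Longrightarrow> borel_le n s b"
proof (induction "\<Sum>i\<in>{1..n}. b i - s i" arbitrary: s rule: less_induct)
  case less
  show ?case
  proof (cases "\<forall>i\<in>{1..n}. s i = b i")
    case True
    then have "s 0 = b 0"
      using less.prems(2) mdeg_split_x0[of n s] mdeg_split_x0[of n b] by simp
    have "s = b"
    proof
      fix i show "s i = b i"
        using True \<open>s 0 = b 0\<close> b less.prems(1) unfolding mons_def
        by (cases "i = 0"; cases "i \<le> n") auto
    qed
    then show ?thesis unfolding borel_le_def by simp
  next
    case False
    then obtain i where i: "i \<in> {1..n}" "s i \<noteq> b i" by auto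
    then have lt: "s i < b i" using less.prems(3) by (simp add: le_neq_implies_less)
    have "(\<Sum>i\<in>{1..n}. s i) < (\<Sum>i\<in>{1..n}. b i)"
      using i lt less.prems(3) by (intro sum_strict_mono_ex1) auto
    then have s0: "0 < s 0"
      using less.prems(2) mdeg_split_x0[of n s] mdeg_split_x0[of n b] by simp
    define s' where "s' = mmove s 0 i"
    have "borel_le n s s'" unfolding s'_def using less.prems(1) s0 i by (intro borel_le_mmove) auto
    moreover have "borel_le n s' b"
    proof (rule less.hyps)
      show "(\<Sum>i\<in>{1..n}. b i - s' i) < (\<Sum>i\<in>{1..n}. b i - s i)"
        using i lt unfolding s'_def mmove_def by (intro sum_strict_mono_ex1) auto
      show "s' \<in> mons n" unfolding s'_def using less.prems(1) i by (intro mmove_mons) auto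
      show "mdeg n s' = mdeg n b" unfolding s'_def using less.prems(2) s0 i by (subst mdeg_mmove) auto
      show "\<forall>l>0. s' l \<le> b l" using less.prems(3) lt i unfolding s'_def mmove_def by auto
    qed
    ultimately show ?thesis unfolding borel_le_def by (rule rtranclp_trans)
  qed
qed

section \<open>Generated and saturated monomial ideals\<close>

lemma mdvd_add_right: "mdvd s a \<Longrightarrow> mdvd s (\<lambda>i. a i + b i)"
  unfolding mdvd_def by (simp add: trans_le_add1)

lemma mons_add: "a \<in> mons n \<Longrightarrow> b \<in> mons n \<Longrightarrow> (\<lambda>i. a i + b i) \<in> mons n"
  unfolding mons_def by simp

lemma mon_ideal_mgen: "mon_ideal n (mgen n S)"
  unfolding mon_ideal_def mgen_def
  using mdvd_add_right mons_add by blast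

lemma mgen_subset:
  assumes "mon_ideal n J" "S \<subseteq> J"
  shows "mgen n S \<subseteq> J"
  using assms mon_ideal_mdvd unfolding mgen_def by blast

lemma borel_fixed_mgen:
  assumes closed: "\<And>s i j. s \<in> S \<Longrightarrow> 0 < s i \<Longrightarrow> i < j \<Longrightarrow> j \<le> n \<Longrightarrow> mmove s i j \<in> S"
  shows "borel_fixed n (mgen n S)"
  unfolding borel_fixed_def
proof (intro conjI mon_ideal_mgen ballI allI impI)
  fix a i j assume a: "a \<in> mgen n S" and ij: "0 < a i \<and> i < j \<and> j \<le> n"
  then obtain s where s: "s \<in> S" "mdvd s a" and am: "a \<in> mons n" unfolding mgen_def by blast
  have "mmove a i j \<in> mons n" using mmove_mons[OF am] ij by simp
  moreover have "\<exists>s'\<in>S. mdvd s' (mmove a i j)"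
  proof (cases "s i < a i")
    case True
    then have "mdvd s (mmove a i j)" using s(2) ij unfolding mdvd_def mmove_def by (auto intro: le_SucI)
    then show ?thesis using s(1) by blast
  next
    case False
    then have si: "s i = a i" using s(2) unfolding mdvd_def by (simp add: le_antisym)
    then have "mmove s i j \<in> S" using closed[OF s(1)] ij by simp
    moreover have "mdvd (mmove s i j) (mmove a i j)" using mmove_mdvd_mmove[OF s(2) si] .
    ultimately show ?thesis by blast
  qed
  ultimately show "mmove a i j \<in> mgen n S" unfolding mgen_def by blast
qed

lemma borel_fixed_msat:
  assumes bf: "borel_fixed n I"
  shows "borel_fixed n (msat n I)"
  unfolding borel_fixed_def mon_ideal_def
proof (intro conjI ballI allI impI)
  show "msat n I \<subseteq> mons n" unfolding msat_def by auto
next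
  fix a b assume a: "a \<in> msat n I" and b: "b \<in> mons n"
  then obtain k where am: "a \<in> mons n" and ak: "\<forall>m\<in>mons_deg n k. (\<lambda>i. a i + m i) \<in> I"
    unfolding msat_def by blast
  have "(\<lambda>i. (a i + b i) + m i) \<in> I" if "m \<in> mons_deg n k" for m
  proof -
    have "(\<lambda>i. (a i + m i) + b i) \<in> I"
      using mon_ideal_add[OF borel_fixed_mon_ideal[OF bf] _ b] ak that by blast
    then show ?thesis by (simp add: ac_simps)
  qed
  then show "(\<lambda>i. a i + b i) \<in> msat n I" using mons_add[OF am b] unfolding msat_def by blast
next
  fix a i j assume a: "a \<in> msat n I" and ij: "0 < a i \<and> i < j \<and> j \<le> n"
  then obtain k where am: "a \<in> mons n" and ak: "\<forall>m\<in>mons_deg n k. (\<lambda>i. a i + m i) \<in> I"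
    unfolding msat_def by blast
  have "(\<lambda>l. mmove a i j l + m l) \<in> I" if "m \<in> mons_deg n k" for m
  proof -
    have "(\<lambda>l. mmove a i j l + m l) = mmove (\<lambda>l. a l + m l) i j"
      using ij unfolding mmove_def by (auto simp: fun_eq_iff)
    moreover have "mmove (\<lambda>l. a l + m l) i j \<in> I"
      using ak that ij by (intro borel_fixed_mmove[OF bf]) auto
    ultimately show ?thesis by simp
  qed
  then show "mmove a i j \<in> msat n I" using mmove_mons[OF am] ij unfolding msat_def by blast
qed

lemma subset_msat: "I \<subseteq> mons n \<Longrightarrow> I \<subseteq> msat n I"
  unfolding msat_def using mons_deg_0 by fastforce

lemma msat_mono: "I \<subseteq> J \<Longrightarrow> msat n I \<subseteq> msat n J"
  unfolding msat_def by blast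

text \<open>Multiplying by a power of \<open>x\<^sub>0\<close> shows that an element of the saturation is divisible
  by a generator up to its \<open>x\<^sub>0\<close>-exponent.\<close>

lemma msat_mgen_le_but_x0:
  assumes "a \<in> msat n (mgen n S)"
  obtains s where "s \<in> S" "\<forall>l>0. s l \<le> a l"
proof -
  obtain k where k: "\<forall>m\<in>mons_deg n k. (\<lambda>i. a i + m i) \<in> mgen n S"
    using assms unfolding msat_def by blast
  define m0 where "m0 = (\<lambda>l::nat. if l = 0 then k else 0)"
  have "m0 \<in> mons_deg n k"
    unfolding mons_deg_def mons_def mdeg_def m0_def by (simp add: sum.delta)
  then obtain s where "s \<in> S" "mdvd s (\<lambda>i. a i + m0 i)" using k unfolding mgen_def by blast
  moreover have "\<forall>l>0. s l \<le> a l"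
    using calculation(2) unfolding mdvd_def m0_def by (metis add.right_neutral less_numeral_extra(3))
  ultimately show ?thesis using that by blast
qed

section \<open>Removing a Borel-minimal generator\<close>

context
  fixes n r :: nat and J :: "(nat \<Rightarrow> nat) set" and \<beta> :: "nat \<Rightarrow> nat"
  assumes bf: "borel_fixed n J"
    and \<beta>: "\<beta> \<in> J \<inter> mons_deg n r"
    and \<beta>_min: "\<forall>a \<in> J \<inter> mons_deg n r. borel_le n a \<beta> \<longrightarrow> a = \<beta>"
begin

lemma remove_minimal_borel_closed:
  assumes "s \<in> J \<inter> mons_deg n r - {\<beta>}" "0 < s i" "i < j" "j \<le> n"
  shows "mmove s i j \<in> J \<inter> mons_deg n r - {\<beta>}"
proof -
  have "mmove s i j \<in> J \<inter> mons_deg n r"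
    using assms borel_fixed_mmove[OF bf] mmove_mons_deg by blast
  moreover have "borel_le n s (mmove s i j)"
    using assms by (intro borel_le_mmove) (auto simp: mons_deg_def)
  ultimately show ?thesis using assms(1) \<beta>_min by auto
qed

lemma x0_multiple_not_in_msat:
  "\<beta>(0 := \<beta> 0 + e) \<notin> msat n (mgen n (J \<inter> mons_deg n r - {\<beta>}))"
proof
  assume "\<beta>(0 := \<beta> 0 + e) \<in> msat n (mgen n (J \<inter> mons_deg n r - {\<beta>}))"
  then obtain s where s: "s \<in> J \<inter> mons_deg n r - {\<beta>}" "\<forall>l>0. s l \<le> (\<beta>(0 := \<beta> 0 + e)) l"
    by (rule msat_mgen_le_but_x0)
  have "borel_le n s \<beta>"
    using s \<beta> by (intro borel_le_of_le_but_x0) (auto simp: mons_deg_def)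
  then show False using s \<beta>_min by blast
qed

lemma in_mgen_remove_minimal:
  assumes \<beta>0: "0 < \<beta> 0"
    and gen: "\<forall>a\<in>J. \<exists>v. mdvd v a \<and> v \<in> J \<and> mdeg n v \<le> r"
    and a: "a \<in> J" "a \<in> mons_deg n t" "r \<le> t" "a \<noteq> \<beta>(0 := \<beta> 0 + (t - r))"
  shows "a \<in> mgen n (J \<inter> mons_deg n r - {\<beta>})"
proof -
  have mi: "mon_ideal n J" using bf by (rule borel_fixed_mon_ideal)
  have am: "a \<in> mons n" "mdeg n a = t" using a(2) unfolding mons_deg_def by auto
  have \<beta>m: "\<beta> \<in> mons n" "mdeg n \<beta> = r" using \<beta> unfolding mons_deg_def by auto
  obtain v where v: "mdvd v a" "v \<in> J" "mdeg n v \<le> r" using gen a(1) by blast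
  obtain w where w: "mdvd v w" "mdvd w a" "mdeg n w = r"
    using mdvd_intermediate_deg[OF v(1) am(1), of r] v(3) a(3) am(2) by blast
  have wm: "w \<in> mons n" using mons_mdvd[OF w(2) am(1)] .
  have wJ: "w \<in> J" using mon_ideal_mdvd[OF mi v(2) wm w(1)] .
  show ?thesis
  proof (cases "w = \<beta>")
    case False
    then have "w \<in> J \<inter> mons_deg n r - {\<beta>}" using wJ wm w(3) unfolding mons_deg_def by simp
    then show ?thesis unfolding mgen_def using w(2) am(1) by blast
  next
    case True
    then have \<beta>a: "mdvd \<beta> a" using w(2) by simp
    have "\<exists>j\<in>{1..n}. \<beta> j < a j"
    proof (rule ccontr)
      assume "\<not> (\<exists>j\<in>{1..n}. \<beta> j < a j)"
      then have "\<forall>j\<in>{1..n}. a j = \<beta> j" using \<beta>a unfolding mdvd_def by (meson le_antisym not_le)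
      then have "a = \<beta>(0 := \<beta> 0 + (mdeg n a - mdeg n \<beta>))"
        using am \<beta>m a(3) by (intro eq_fun_upd_x0_if_eq_but_x0) auto
      then show False using a(4) am(2) \<beta>m(2) by simp
    qed
    then obtain j where j: "j \<in> {1..n}" "\<beta> j < a j" by blast
    have "mmove \<beta> 0 j \<in> J \<inter> mons_deg n r - {\<beta>}"
    proof -
      have "mmove \<beta> 0 j \<in> J \<inter> mons_deg n r"
        using j \<beta> \<beta>0 borel_fixed_mmove[OF bf] mmove_mons_deg by auto
      moreover have "(mmove \<beta> 0 j) j \<noteq> \<beta> j" using j unfolding mmove_def by auto
      then have "mmove \<beta> 0 j \<noteq> \<beta>" by metis
      ultimately show ?thesis by blast
    qed
    moreover have "mdvd (mmove \<beta> 0 j) a" using mdvd_mmove[OF \<beta>a j(2)] .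
    ultimately show ?thesis unfolding mgen_def using am(1) by blast
  qed
qed

text \<open>From degree \<open>r\<close> on, the only monomial lost is \<open>\<beta> x\<^sub>0\<^sup>t\<^sup>-\<^sup>r\<close>.\<close>

lemma hilb_fun_remove_minimal:
  assumes sat: "msat n J = J" and \<beta>0: "0 < \<beta> 0"
    and gen: "\<forall>a\<in>J. \<exists>v. mdvd v a \<and> v \<in> J \<and> mdeg n v \<le> r"
    and t: "r \<le> t"
  shows "hilb_fun n (msat n (mgen n (J \<inter> mons_deg n r - {\<beta>}))) t = hilb_fun n J t + 1"
proof -
  define I where "I = msat n (mgen n (J \<inter> mons_deg n r - {\<beta>}))"
  define b where "b = \<beta>(0 := \<beta> 0 + (t - r))"
  have mi: "mon_ideal n J" using bf by (rule borel_fixed_mon_ideal)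
  have "mgen n (J \<inter> mons_deg n r - {\<beta>}) \<subseteq> J" by (rule mgen_subset[OF mi]) blast
  then have "I \<subseteq> msat n J" unfolding I_def by (rule msat_mono)
  with sat have IJ: "I \<subseteq> J" by simp
  have "b \<in> mons_deg n t"
  proof -
    have "\<beta> \<in> mons n" "mdeg n \<beta> = r" using \<beta> unfolding mons_deg_def by auto
    moreover have "mdeg n b + \<beta> 0 = mdeg n \<beta> + (\<beta> 0 + (t - r))" unfolding b_def by (rule mdeg_fun_upd) simp
    ultimately show ?thesis using t unfolding b_def mons_deg_def mons_def by auto
  qed
  moreover have "b \<in> J"
    using \<beta> mon_ideal_mdvd[OF mi] \<open>b \<in> mons_deg n t\<close> unfolding b_def mons_deg_def mdvd_def by auto
  moreover have "b \<notin> I" unfolding I_def b_def by (rule x0_multiple_not_in_msat)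
  moreover have "a \<in> I" if "a \<in> mons_deg n t" "a \<in> J" "a \<noteq> b" for a
  proof -
    have "a \<in> mgen n (J \<inter> mons_deg n r - {\<beta>})"
      using in_mgen_remove_minimal[OF \<beta>0 gen that(2,1) t that(3)[unfolded b_def]] .
    moreover have "mgen n (J \<inter> mons_deg n r - {\<beta>}) \<subseteq> mons n" unfolding mgen_def by blast
    ultimately show ?thesis unfolding I_def using subset_msat by blast
  qed
  ultimately have "mons_deg n t - I = insert b (mons_deg n t - J)"
    using IJ by blast
  moreover have "b \<notin> mons_deg n t - J" using \<open>b \<in> J\<close> by simp
  ultimately show ?thesis unfolding I_def[symmetric] hilb_fun_def using finite_mons_deg by simp
qed

end

theorem lemma3p1:
  fixes n r :: nat and J :: "(nat \<Rightarrow> nat) set" and p :: "real poly" and \<beta> :: "nat \<Rightarrow> nat"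
  assumes "borel_fixed n J"
    and "msat n J = J"
    and "has_hilb_poly n J p"
    and "r = gotzmann_number p"
    and "\<beta> \<in> J \<inter> mons_deg n r"
    and "\<forall>a \<in> J \<inter> mons_deg n r. borel_le n a \<beta> \<longrightarrow> a = \<beta>"
    and "0 < \<beta> 0"
  shows "borel_fixed n (msat n (mgen n ((J \<inter> mons_deg n r) - {\<beta>})))
       \<and> has_hilb_poly n (msat n (mgen n ((J \<inter> mons_deg n r) - {\<beta>}))) (p + 1)"
proof
  show "borel_fixed n (msat n (mgen n (J \<inter> mons_deg n r - {\<beta>})))"
    using remove_minimal_borel_closed[OF assms(1,5,6)] by (intro borel_fixed_msat borel_fixed_mgen)
next
  obtain as where "gotzmann_decomp p as"
    and gen: "\<And>a. a \<in> J \<Longrightarrow> \<exists>v. mdvd v a \<and> v \<in> J \<and> mdeg n v \<le> length as"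
    using saturated_borel_gotzmann[OF assms(1-3)] by blast
  then have "r = length as" using assms(4) gotzmann_number_eq by simp
  then have hI: "hilb_fun n (msat n (mgen n (J \<inter> mons_deg n r - {\<beta>}))) t = hilb_fun n J t + 1"
    if "r \<le> t" for t
    using hilb_fun_remove_minimal[OF assms(1,5,6,2,7) _ that] gen by blast
  obtain t0 where "\<forall>t\<ge>t0. real (hilb_fun n J t) = poly p (real t)"
    using assms(3) unfolding has_hilb_poly_def by blast
  then have "\<forall>t\<ge>t0 + r. real (hilb_fun n (msat n (mgen n (J \<inter> mons_deg n r - {\<beta>}))) t) = poly (p + 1) (real t)"
    using hI by simp
  then show "has_hilb_poly n (msat n (mgen n (J \<inter> mons_deg n r - {\<beta>}))) (p + 1)"
    unfolding has_hilb_poly_def by blast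
qed

end
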